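(* Let $\mathcal{M}=(E,\mathcal{I},A,w)$ be a weighted uncertainty matroid with $A_e=\{L_e,U_e\}$ for all $e\in E$, and let $M[D,K]$ be a compatible minor of $\mathcal{M}$ that contains no element $e$ with $w_e=U_e$ or $w_e=L_e$. Then $K$ is a minimum-weight basis of $\mathcal{M}$ that can be verified with a minimum-cost certificate. Moreover, if in addition the query costs are uniform and there are reals $L<U$ with $A_e=\{L,U\}$ for all $e\in E$, then every minimum-weight basis $B$ of $\mathcal{M}$ has the same verification cost.
   Context: A weighted uncertainty matroid $\mathcal{M}=(E,\mathcal{I},A,w)$ consists of a matroid $M=(E,\mathcal{I})$ on a finite set $E$, for each $e\in E$ a non-empty finite union $A_e$ of bounded real intervals (each open or closed, single points allowed), a weight $w_e\in A_e$, and a query cost $c_e\ge0$. $L_e=\inf A_e$, $U_e=\sup A_e$. A minimum-weight basis (MWB) is a basis minimizing total weight. A weight assignment is $w^*$ with $w^*_e\in A_e$, consistent with $Q$ if $w^*_e=w_e$ on $Q$. $Q$ verifies an MWB $B$ if for every weight assignment consistent with $Q$, $B$ is an MWB with respect to it; a certificate for $\mathcal{M}$ is a set verifying some MWB; $c^*$ is the minimum cost $\sum_{e\in Q}c_e$ of a certificate for $\mathcal{M}$ (a minimum-cost certificate). The verification cost of an MWB $B$ is the minimum cost of a set verifying $B$. For $D,K\subseteq E$, $M[D,K]$ is the matroid obtained from $M$ by deleting $D$ and contracting $K$, ground set $E\setminus(D\cup K)$. $M[D,K]$ is a compatible minor if there is a set $Q$ of cost $c^*$ verifying an MWB $B$ of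 $\mathcal{M}$ with $K\subseteq B$ and $D\cap B=\emptyset$. *)

theory Defs
  imports "HOL-Analysis.Analysis"
begin

definition matroid :: "'a set \<Rightarrow> ('a set \<Rightarrow> bool) \<Rightarrow> bool" where
  "matroid E indep \<longleftrightarrow>
     finite E \<and>
     indep {} \<and>
     (\<forall>X. indep X \<longrightarrow> X \<subseteq> E) \<and>
     (\<forall>X Y. indep Y \<and> X \<subseteq> Y \<longrightarrow> indep X) \<and>
     (\<forall>X Y. indep X \<and> indep Y \<and> card X < card Y \<longrightarrow>
        (\<exists>e\<in>Y - X. indep (insert e X)))"

definition basis :: "'a set \<Rightarrow> ('a set \<Rightarrow> bool) \<Rightarrow> 'a set \<Rightarrow> bool" where
  "basis E indep B \<longleftrightarrow> B \<subseteq> E \<and> indep B \<and> (\<forall>X. indep X \<and> B \<subseteq> X \<longrightarrow> X = B)"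

definition bounded_interval :: "real set \<Rightarrow> bool" where
  "bounded_interval S \<longleftrightarrow> S \<noteq> {} \<and> is_interval S \<and> bounded S"

definition uncertainty_area :: "real set \<Rightarrow> bool" where
  "uncertainty_area S \<longleftrightarrow>
     (\<exists>F. finite F \<and> F \<noteq> {} \<and> (\<forall>I\<in>F. bounded_interval I) \<and> S = \<Union>F)"

definition lower :: "('a \<Rightarrow> real set) \<Rightarrow> 'a \<Rightarrow> real" where
  "lower A e = Inf (A e)"

definition upper :: "('a \<Rightarrow> real set) \<Rightarrow> 'a \<Rightarrow> real" where
  "upper A e = Sup (A e)"

definition wu_matroid ::
  "'a set \<Rightarrow> ('a set \<Rightarrow> bool) \<Rightarrow> ('a \<Rightarrow> real set) \<Rightarrow> ('a \<Rightarrow> real) \<Rightarrow> ('a \<Rightarrow> real) \<Rightarrow> bool" where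
  "wu_matroid E indep A w c \<longleftrightarrow>
     matroid E indep \<and>
     (\<forall>e\<in>E. uncertainty_area (A e) \<and> w e \<in> A e \<and> c e \<ge> 0)"

definition is_MWB :: "'a set \<Rightarrow> ('a set \<Rightarrow> bool) \<Rightarrow> ('a \<Rightarrow> real) \<Rightarrow> 'a set \<Rightarrow> bool" where
  "is_MWB E indep w' B \<longleftrightarrow>
     basis E indep B \<and> (\<forall>B'. basis E indep B' \<longrightarrow> sum w' B \<le> sum w' B')"

definition weight_assignment :: "'a set \<Rightarrow> ('a \<Rightarrow> real set) \<Rightarrow> ('a \<Rightarrow> real) \<Rightarrow> bool" where
  "weight_assignment E A w' \<longleftrightarrow> (\<forall>e\<in>E. w' e \<in> A e)"

definition consistent :: "'a set \<Rightarrow> ('a \<Rightarrow> real set) \<Rightarrow> ('a \<Rightarrow> real) \<Rightarrow> 'a set \<Rightarrow> ('a \<Rightarrow> real) \<Rightarrow> bool" where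
  "consistent E A w Q w' \<longleftrightarrow> weight_assignment E A w' \<and> (\<forall>e\<in>Q. w' e = w e)"

definition verifies ::
  "'a set \<Rightarrow> ('a set \<Rightarrow> bool) \<Rightarrow> ('a \<Rightarrow> real set) \<Rightarrow> ('a \<Rightarrow> real) \<Rightarrow> 'a set \<Rightarrow> 'a set \<Rightarrow> bool" where
  "verifies E indep A w Q B \<longleftrightarrow>
     Q \<subseteq> E \<and> (\<forall>w'. consistent E A w Q w' \<longrightarrow> is_MWB E indep w' B)"

definition certificate ::
  "'a set \<Rightarrow> ('a set \<Rightarrow> bool) \<Rightarrow> ('a \<Rightarrow> real set) \<Rightarrow> ('a \<Rightarrow> real) \<Rightarrow> 'a set \<Rightarrow> bool" where
  "certificate E indep A w Q \<longleftrightarrow> (\<exists>B. is_MWB E indep w B \<and> verifies E indep A w Q B)"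

definition opt_cost ::
  "'a set \<Rightarrow> ('a set \<Rightarrow> bool) \<Rightarrow> ('a \<Rightarrow> real set) \<Rightarrow> ('a \<Rightarrow> real) \<Rightarrow> ('a \<Rightarrow> real) \<Rightarrow> real" where
  "opt_cost E indep A w c = Min (sum c ` {Q. certificate E indep A w Q})"

definition verification_cost ::
  "'a set \<Rightarrow> ('a set \<Rightarrow> bool) \<Rightarrow> ('a \<Rightarrow> real set) \<Rightarrow> ('a \<Rightarrow> real) \<Rightarrow> ('a \<Rightarrow> real) \<Rightarrow> 'a set \<Rightarrow> real" where
  "verification_cost E indep A w c B = Min (sum c ` {Q. verifies E indep A w Q B})"

text \<open>Ground set of the minor \<open>M[D,K]\<close> (delete \<open>D\<close>, contract \<open>K\<close>).\<close>
definition minor_ground :: "'a set \<Rightarrow> 'a set \<Rightarrow> 'a set \<Rightarrow> 'a set" where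
  "minor_ground E D K = E - (D \<union> K)"

definition compatible_minor ::
  "'a set \<Rightarrow> ('a set \<Rightarrow> bool) \<Rightarrow> ('a \<Rightarrow> real set) \<Rightarrow> ('a \<Rightarrow> real) \<Rightarrow> ('a \<Rightarrow> real)
     \<Rightarrow> 'a set \<Rightarrow> 'a set \<Rightarrow> bool" where
  "compatible_minor E indep A w c D K \<longleftrightarrow>
     D \<subseteq> E \<and> K \<subseteq> E \<and> D \<inter> K = {} \<and>
     (\<exists>Q B. verifies E indep A w Q B \<and> is_MWB E indep w B \<and>
            sum c Q = opt_cost E indep A w c \<and> K \<subseteq> B \<and> D \<inter> B = {})"

end

theory Submission
  imports Defs
begin

text \<open>The first part is immediate: every element of \<open>E\<close> has weight \<open>L\<^sub>e\<close> or \<open>U\<^sub>e\<close>, so by hypothesis the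
  minor has empty ground set and the basis \<open>B\<close> of the compatible minor satisfies \<open>K \<subseteq> B \<subseteq> D \<union> K\<close>,
  \<open>D \<inter> B = {}\<close>, i.e. \<open>B = K\<close>.

  For the second part, with weights in \<open>{L, U}\<close> a basis has minimum weight iff it contains as many
  light (\<open>L\<close>-)elements as possible, and \<open>Q\<close> verifies \<open>B\<close> iff \<open>B\<close> is minimum for the worst case
  (\<open>w\<close> on \<open>Q\<close>, \<open>U\<close> on \<open>B - Q\<close>, \<open>L\<close> elsewhere). Hence \<open>Q\<close> verifies \<open>B\<close> iff the queried light
  elements \<open>S\<close> of \<open>B\<close> span all queried light elements and all unqueried elements outside \<open>B\<close>.
  Let \<open>Q'\<close> verify a minimum-weight basis \<open>B'\<close> and let \<open>F\<close> be the span of its \<open>S'\<close>. Any other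
  minimum-weight basis \<open>B\<close> contains all light elements outside \<open>F\<close> and \<open>|S'|\<close> light elements
  inside \<open>F\<close>; these, together with \<open>E - B - F\<close>, verify \<open>B\<close> and are at most \<open>|Q'|\<close> many.\<close>

lemma matroid_finite: "matroid E indep \<Longrightarrow> finite E"
  by (simp add: matroid_def)

lemma matroid_indep_subset: "matroid E indep \<Longrightarrow> indep X \<Longrightarrow> X \<subseteq> E"
  by (simp add: matroid_def)

lemma matroid_indep_finite: "matroid E indep \<Longrightarrow> indep X \<Longrightarrow> finite X"
  by (meson matroid_finite matroid_indep_subset finite_subset)

lemma matroid_indep_mono: "matroid E indep \<Longrightarrow> indep Y \<Longrightarrow> X \<subseteq> Y \<Longrightarrow> indep X"
  unfolding matroid_def by blast

lemma matroid_augment: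
  "matroid E indep \<Longrightarrow> indep X \<Longrightarrow> indep Y \<Longrightarrow> card X < card Y \<Longrightarrow> \<exists>e\<in>Y - X. indep (insert e X)"
  by (simp add: matroid_def)

lemma basis_indep: "basis E indep B \<Longrightarrow> indep B"
  by (simp add: basis_def)

lemma basis_subset: "basis E indep B \<Longrightarrow> B \<subseteq> E"
  by (simp add: basis_def)

lemma basis_maximal: "basis E indep B \<Longrightarrow> indep X \<Longrightarrow> B \<subseteq> X \<Longrightarrow> X = B"
  by (simp add: basis_def)

lemma basis_subset_indep: "matroid E indep \<Longrightarrow> basis E indep B \<Longrightarrow> X \<subseteq> B \<Longrightarrow> indep X"
  using basis_indep matroid_indep_mono by blast

lemma basis_card_eq:
  assumes M: "matroid E indep" and "basis E indep B" "basis E indep B'"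
  shows "card B = card B'"
proof -
  have "\<not> card B1 < card B2" if B1: "basis E indep B1" and B2: "basis E indep B2" for B1 B2
  proof
    assume "card B1 < card B2"
    then obtain e where "e \<in> B2 - B1" "indep (insert e B1)"
      using matroid_augment[OF M basis_indep[OF B1] basis_indep[OF B2]] by blast
    moreover from this have "insert e B1 = B1"
      using basis_maximal[OF B1] by blast
    ultimately show False
      by blast
  qed
  then show ?thesis
    using assms by (meson linorder_neqE_nat)
qed

lemma indep_extend_to_basis:
  assumes M: "matroid E indep" and "indep J"
  obtains B where "basis E indep B" "J \<subseteq> B"
proof -
  define C where "C = {Y. indep Y \<and> J \<subseteq> Y}"
  have "C \<subseteq> Pow E"
    using matroid_indep_subset[OF M] by (auto simp: C_def)
  then have "finite C"
    using matroid_finite[OF M] by (simp add: finite_subset)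
  moreover have "J \<in> C"
    using \<open>indep J\<close> by (simp add: C_def)
  ultimately obtain B where B: "B \<in> C" and max: "\<forall>Y\<in>C. B \<subseteq> Y \<longrightarrow> B = Y"
    using finite_has_maximal2 by blast
  have "basis E indep B"
    unfolding basis_def
  proof (intro conjI allI impI)
    show "indep B"
      using B by (simp add: C_def)
    then show "B \<subseteq> E"
      by (rule matroid_indep_subset[OF M])
    show "X = B" if "indep X \<and> B \<subseteq> X" for X
      using that B max by (auto simp: C_def)
  qed
  moreover have "J \<subseteq> B"
    using B by (simp add: C_def)
  ultimately show thesis
    by (rule that)
qed

text \<open>For independent \<open>S\<close> this is the closure of \<open>S\<close>; it is only used for independent sets.\<close>
definition matroid_span :: "'a set \<Rightarrow> ('a set \<Rightarrow> bool) \<Rightarrow> 'a set \<Rightarrow> 'a set" where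
  "matroid_span E indep S = {e\<in>E. e \<in> S \<or> \<not> indep (insert e S)}"

lemma indep_card_le_if_subset_span:
  assumes "matroid E indep" "indep S" "indep I" "I \<subseteq> matroid_span E indep S"
  shows "card I \<le> card S"
proof (rule ccontr)
  assume "\<not> card I \<le> card S"
  then obtain e where "e \<in> I - S" "indep (insert e S)"
    using matroid_augment[OF assms(1-3)] by auto
  then show False
    using assms(4) unfolding matroid_span_def by blast
qed

lemma matroid_span_subset_if_card_eq:
  assumes M: "matroid E indep" and "indep S" "indep T"
    and T: "T \<subseteq> matroid_span E indep S" and "card T = card S"
  shows "matroid_span E indep S \<subseteq> matroid_span E indep T"
proof
  fix e assume e: "e \<in> matroid_span E indep S"
  show "e \<in> matroid_span E indep T"
  proof (rule ccontr)
    assume "e \<notin> matroid_span E indep T"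
    then have "e \<notin> T" "indep (insert e T)"
      using e by (auto simp: matroid_span_def)
    moreover have "insert e T \<subseteq> matroid_span E indep S"
      using e T by blast
    ultimately have "card (insert e T) \<le> card S"
      using indep_card_le_if_subset_span[OF M \<open>indep S\<close>] by blast
    then show False
      using \<open>e \<notin> T\<close> \<open>card T = card S\<close> matroid_indep_finite[OF M \<open>indep T\<close>] by simp
  qed
qed

lemma indep_Int_matroid_span:
  assumes "matroid E indep" "indep B" "S \<subseteq> B"
  shows "B \<inter> matroid_span E indep S = S"
  using assms matroid_indep_subset[OF assms(1-2)] matroid_indep_mono[OF assms(1-2)]
  unfolding matroid_span_def by blast

text \<open>Both sides say that \<open>|S|\<close> is the rank of \<open>Z\<close>.\<close>
lemma subset_matroid_span_iff_card_Int_bases_le: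
  assumes M: "matroid E indep" and "indep S" "S \<subseteq> Z" "Z \<subseteq> E"
  shows "Z \<subseteq> matroid_span E indep S \<longleftrightarrow> (\<forall>B. basis E indep B \<longrightarrow> card (B \<inter> Z) \<le> card S)"
proof
  assume "Z \<subseteq> matroid_span E indep S"
  then show "\<forall>B. basis E indep B \<longrightarrow> card (B \<inter> Z) \<le> card S"
    using indep_card_le_if_subset_span[OF M \<open>indep S\<close>] matroid_indep_mono[OF M]
    unfolding basis_def by (meson inf_le1 inf_le2 order_trans)
next
  assume bound: "\<forall>B. basis E indep B \<longrightarrow> card (B \<inter> Z) \<le> card S"
  show "Z \<subseteq> matroid_span E indep S"
  proof
    fix e assume "e \<in> Z"
    show "e \<in> matroid_span E indep S"
    proof (rule ccontr)
      assume "e \<notin> matroid_span E indep S"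
      then have "e \<notin> S" and "indep (insert e S)"
        using \<open>e \<in> Z\<close> \<open>Z \<subseteq> E\<close> by (auto simp: matroid_span_def)
      then obtain B where B: "basis E indep B" "insert e S \<subseteq> B"
        using indep_extend_to_basis[OF M] by metis
      have "card (insert e S) \<le> card (B \<inter> Z)"
        using B \<open>e \<in> Z\<close> \<open>S \<subseteq> Z\<close> matroid_indep_finite[OF M] unfolding basis_def
        by (intro card_mono) auto
      then show False
        using bound B(1) \<open>e \<notin> S\<close> matroid_indep_finite[OF M \<open>indep S\<close>] by fastforce
    qed
  qed
qed

lemma sum_two_valued:
  fixes v :: "'a \<Rightarrow> real"
  assumes "finite B" "\<forall>e\<in>B. v e = L \<or> v e = U"
  shows "sum v B = U * card B - (U - L) * card {e\<in>B. v e = L}"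
proof -
  have "sum v B = (\<Sum>e\<in>B. U - (U - L) * (if v e = L then 1 else 0))"
    using assms(2) by (intro sum.cong) auto
  also have "\<dots> = U * card B - (U - L) * (\<Sum>e\<in>B. if v e = L then 1 else 0)"
    by (simp add: sum_subtractf sum_distrib_left)
  also have "(\<Sum>e\<in>B. if v e = L then 1 else 0 :: real) = card {e\<in>B. v e = L}"
    using assms(1) by (simp add: sum.If_cases Int_def conj_commute)
  finally show ?thesis .
qed

lemma is_MWB_two_valued_iff:
  fixes v :: "'a \<Rightarrow> real"
  assumes M: "matroid E indep" and "L < U" and v: "\<forall>e\<in>E. v e = L \<or> v e = U"
    and B: "basis E indep B"
  shows "is_MWB E indep v B \<longleftrightarrow>
    (\<forall>B'. basis E indep B' \<longrightarrow> card {e\<in>B'. v e = L} \<le> card {e\<in>B. v e = L})"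
proof -
  have sum_basis: "sum v X = U * card B - (U - L) * card {e\<in>X. v e = L}"
    if "basis E indep X" for X
  proof -
    have "finite X" "X \<subseteq> E"
      using that matroid_indep_finite[OF M] by (auto simp: basis_def)
    then show ?thesis
      using sum_two_valued[of X v L U] v basis_card_eq[OF M that B] by auto
  qed
  have "sum v B \<le> sum v B' \<longleftrightarrow> card {e\<in>B'. v e = L} \<le> card {e\<in>B. v e = L}"
    if "basis E indep B'" for B'
    using sum_basis[OF B] sum_basis[OF that] \<open>L < U\<close> by simp
  then show ?thesis
    using B unfolding is_MWB_def by blast
qed

lemma card_Diff_Diff_le:
  assumes "finite E" and "B \<subseteq> E" "B' \<subseteq> E" and "card B = card B'"
    and "card (B \<inter> F) \<le> card (B' \<inter> F)"
  shows "card (E - B - F) \<le> card (E - B' - F)"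
proof -
  have split_E: "card (E - F) = card (E - X - F) + card (X - F)" if "X \<subseteq> E" for X
  proof -
    have "card (E - F) = card ((E - X - F) \<union> (X - F))"
      using that by (intro arg_cong[where f = card]) blast
    also have "\<dots> = card (E - X - F) + card (X - F)"
      using that \<open>finite E\<close> by (intro card_Un_disjoint) (auto intro: finite_subset)
    finally show ?thesis .
  qed
  have split_X: "card X = card (X \<inter> F) + card (X - F)" if "X \<subseteq> E" for X
    using that \<open>finite E\<close> by (simp add: card_Int_Diff finite_subset)
  show ?thesis
    using split_E[OF \<open>B \<subseteq> E\<close>] split_E[OF \<open>B' \<subseteq> E\<close>] split_X[OF \<open>B \<subseteq> E\<close>] split_X[OF \<open>B' \<subseteq> E\<close>]
      \<open>card B = card B'\<close> \<open>card (B \<inter> F) \<le> card (B' \<inter> F)\<close> by linarith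
qed

lemma verifies_ground_set:
  assumes "is_MWB E indep w B"
  shows "verifies E indep A w E B"
  unfolding verifies_def
proof (intro conjI allI impI subset_refl)
  fix w' assume "consistent E A w E w'"
  then have "sum w' X = sum w X" if "basis E indep X" for X
    using basis_subset[OF that] by (intro sum.cong) (auto simp: consistent_def)
  then show "is_MWB E indep w' B"
    using assms unfolding is_MWB_def by simp
qed

lemma finite_verifying_sets: "finite E \<Longrightarrow> finite {Q. verifies E indep A w Q B}"
  by (rule finite_subset[of _ "Pow E"]) (auto simp: verifies_def)

lemma verification_cost_le_sum:
  "finite E \<Longrightarrow> verifies E indep A w Q B \<Longrightarrow> verification_cost E indep A w c B \<le> sum c Q"
  unfolding verification_cost_def by (intro Min_le finite_imageI finite_verifying_sets) auto

lemma verification_cost_attained: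
  assumes "finite E" "is_MWB E indep w B"
  obtains Q where "verifies E indep A w Q B" "sum c Q = verification_cost E indep A w c B"
proof -
  have "verification_cost E indep A w c B \<in> sum c ` {Q. verifies E indep A w Q B}"
    unfolding verification_cost_def
    using finite_verifying_sets[OF assms(1), of indep A w B] verifies_ground_set[OF assms(2), of A]
    by (intro Min_in finite_imageI) auto
  then show thesis
    using that by auto
qed

lemma compatible_minor_empty_ground:
  assumes "compatible_minor E indep A w c D K" "minor_ground E D K = {}"
  shows "is_MWB E indep w K \<and> (\<exists>Q. verifies E indep A w Q K \<and> sum c Q = opt_cost E indep A w c)"
proof -
  obtain Q B where "verifies E indep A w Q B" "is_MWB E indep w B"
    "sum c Q = opt_cost E indep A w c" "K \<subseteq> B" "D \<inter> B = {}"
    using assms(1) unfolding compatible_minor_def by blast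
  moreover from this have "B = K"
    using assms(2) basis_subset[of E indep B] unfolding is_MWB_def minor_ground_def by blast
  ultimately show ?thesis
    by blast
qed

locale two_valued_uncertainty_matroid =
  fixes E :: "'a set" and indep :: "'a set \<Rightarrow> bool" and A :: "'a \<Rightarrow> real set"
    and w :: "'a \<Rightarrow> real" and L U :: real
  assumes matroid: "matroid E indep"
    and lower_less_upper: "L < U"
    and areas: "\<And>e. e \<in> E \<Longrightarrow> A e = {L, U}"
    and weights: "\<And>e. e \<in> E \<Longrightarrow> w e \<in> A e"
begin

definition light :: "'a set" where
  "light = {e\<in>E. w e = L}"

definition worst_case :: "'a set \<Rightarrow> 'a set \<Rightarrow> 'a \<Rightarrow> real" where
  "worst_case Q B e = (if e \<in> Q then w e else if e \<in> B then U else L)"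

lemma weights_two_valued:
  assumes "e \<in> E"
  shows "w e = L \<or> w e = U"
  using areas[OF assms] weights[OF assms] by simp

lemma basis_finite: "basis E indep B \<Longrightarrow> finite B"
  using matroid_indep_finite[OF matroid] by (simp add: basis_def)

lemma light_subset: "light \<subseteq> E"
  by (auto simp: light_def)

lemma finite_light: "finite light"
  using matroid_finite[OF matroid] by (simp add: light_def)

lemma verifies_iff_worst_case:
  "verifies E indep A w Q B \<longleftrightarrow> Q \<subseteq> E \<and> is_MWB E indep (worst_case Q B) B"
proof
  assume V: "verifies E indep A w Q B"
  have "worst_case Q B e \<in> A e" if "e \<in> E" for e
    using that areas[of e] weights[of e] by (simp add: worst_case_def)
  then have "consistent E A w Q (worst_case Q B)"
    by (simp add: consistent_def weight_assignment_def worst_case_def)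
  then show "Q \<subseteq> E \<and> is_MWB E indep (worst_case Q B) B"
    using V unfolding verifies_def by blast
next
  assume "Q \<subseteq> E \<and> is_MWB E indep (worst_case Q B) B"
  then have "Q \<subseteq> E" and MWB: "is_MWB E indep (worst_case Q B) B"
    by auto
  then have B: "basis E indep B"
    by (simp add: is_MWB_def)
  show "verifies E indep A w Q B"
    unfolding verifies_def
  proof (intro conjI allI impI)
    fix w' assume w': "consistent E A w Q w'"
    have w'_Q: "w' e = w e" if "e \<in> Q" for e
      using w' that by (simp add: consistent_def)
    have w'_bounds: "L \<le> w' e \<and> w' e \<le> U" if "e \<in> E" for e
    proof -
      have "w' e \<in> A e"
        using w' that by (simp add: consistent_def weight_assignment_def)
      then show ?thesis
        using areas[OF that] lower_less_upper by auto
    qed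
    show "is_MWB E indep w' B"
      unfolding is_MWB_def
    proof (intro conjI allI impI B)
      fix B' assume B': "basis E indep B'"
      have "B \<subseteq> E" "B' \<subseteq> E"
        using B B' by (auto simp: basis_def)
      text \<open>Passing from \<open>w'\<close> to the worst case raises the weights on \<open>B - B'\<close> and lowers them on \<open>B' - B\<close>.\<close>
      have "w' e \<le> worst_case Q B e" if "e \<in> B - B'" for e
        using that \<open>B \<subseteq> E\<close> w'_Q[of e] w'_bounds[of e] by (auto simp: worst_case_def)
      then have up: "sum w' (B - B') \<le> sum (worst_case Q B) (B - B')"
        by (rule sum_mono)
      have "worst_case Q B e \<le> w' e" if "e \<in> B' - B" for e
        using that \<open>B' \<subseteq> E\<close> w'_Q[of e] w'_bounds[of e] by (auto simp: worst_case_def)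
      then have down: "sum (worst_case Q B) (B' - B) \<le> sum w' (B' - B)"
        by (rule sum_mono)
      have split: "sum f B = sum f (B \<inter> B') + sum f (B - B')"
        "sum f B' = sum f (B \<inter> B') + sum f (B' - B)" for f :: "'a \<Rightarrow> real"
        using sum.Int_Diff[OF basis_finite[OF B], of f B'] sum.Int_Diff[OF basis_finite[OF B'], of f B]
        by (simp_all add: Int_commute)
      have "sum (worst_case Q B) B \<le> sum (worst_case Q B) B'"
        using MWB B' by (simp add: is_MWB_def)
      then show "sum w' B \<le> sum w' B'"
        using up down split[of w'] split[of "worst_case Q B"] by linarith
    qed
  qed fact
qed

lemma verifies_iff_subset_matroid_span:
  assumes B: "basis E indep B"
  shows "verifies E indep A w Q B \<longleftrightarrow>
    Q \<subseteq> E \<and> Q \<inter> light \<union> (E - B - Q) \<subseteq> matroid_span E indep (B \<inter> Q \<inter> light)"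
proof -
  let ?Z = "Q \<inter> light \<union> (E - B - Q)" and ?S = "B \<inter> Q \<inter> light"
  have "B \<subseteq> E" "indep ?S"
    using basis_subset[OF B] basis_subset_indep[OF matroid B, of ?S] by auto
  have low: "{e\<in>B'. worst_case Q B e = L} = B' \<inter> ?Z" if "basis E indep B'" for B'
    using that lower_less_upper unfolding worst_case_def light_def basis_def by auto
  have "?Z \<subseteq> matroid_span E indep ?S \<longleftrightarrow>
      (\<forall>B'. basis E indep B' \<longrightarrow> card (B' \<inter> ?Z) \<le> card ?S)"
    using \<open>B \<subseteq> E\<close> \<open>indep ?S\<close>
    by (intro subset_matroid_span_iff_card_Int_bases_le[OF matroid]) (auto simp: light_def)
  also have "\<dots> \<longleftrightarrow> (\<forall>B'. basis E indep B' \<longrightarrow>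
      card {e\<in>B'. worst_case Q B e = L} \<le> card {e\<in>B. worst_case Q B e = L})"
  proof -
    have "B \<inter> ?Z = ?S"
      by blast
    then show ?thesis
      using low low[OF B] by simp
  qed
  also have "\<dots> \<longleftrightarrow> is_MWB E indep (worst_case Q B) B"
    using is_MWB_two_valued_iff[OF matroid lower_less_upper _ B] weights_two_valued
    by (simp add: worst_case_def)
  finally show ?thesis
    using verifies_iff_worst_case by blast
qed

lemma is_MWB_card_light_eq:
  assumes "is_MWB E indep w B" "is_MWB E indep w B'"
  shows "card (B \<inter> light) = card (B' \<inter> light)"
proof -
  have B: "basis E indep B" and B': "basis E indep B'"
    using assms by (simp_all add: is_MWB_def)
  have "\<forall>e\<in>E. w e = L \<or> w e = U"
    using weights_two_valued by blast
  note MWB_iff = is_MWB_two_valued_iff[OF matroid lower_less_upper this]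
  have light_part: "{e\<in>X. w e = L} = X \<inter> light" if "basis E indep X" for X
    using basis_subset[OF that] by (auto simp: light_def)
  have "card (B' \<inter> light) \<le> card (B \<inter> light)"
    using assms(1) MWB_iff[OF B] B' by (simp add: light_part B B')
  moreover have "card (B \<inter> light) \<le> card (B' \<inter> light)"
    using assms(2) MWB_iff[OF B'] B by (simp add: light_part B B')
  ultimately show ?thesis
    by simp
qed

text \<open>\<open>B'\<close> contains all light elements outside \<open>F\<close>, and inside \<open>F\<close> no independent set is larger than
  \<open>B' \<inter> Q' \<inter> light\<close>; as all minimum-weight bases have equally many light elements, \<open>B\<close> must match
  \<open>B'\<close> on both counts.\<close>
lemma is_MWB_light_parts:
  assumes MB: "is_MWB E indep w B" and MB': "is_MWB E indep w B'"
    and V': "verifies E indep A w Q' B'"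
  defines "F \<equiv> matroid_span E indep (B' \<inter> Q' \<inter> light)"
  shows "light - F \<subseteq> B" and "card (B \<inter> light \<inter> F) = card (B' \<inter> Q' \<inter> light)"
proof -
  define S' where "S' = B' \<inter> Q' \<inter> light"
  have F_S': "F = matroid_span E indep S'"
    by (simp add: F_def S'_def)
  have B: "basis E indep B" and B': "basis E indep B'"
    using MB MB' by (simp_all add: is_MWB_def)
  have "indep S'"
    unfolding S'_def by (rule basis_subset_indep[OF matroid B']) auto
  have "S' \<subseteq> F"
    using basis_subset[OF B'] by (auto simp: F_S' S'_def matroid_span_def)
  have "B' \<inter> F = S'"
    unfolding F_S' by (rule indep_Int_matroid_span[OF matroid basis_indep[OF B']]) (auto simp: S'_def)
  have "Q' \<inter> light \<union> (E - B' - Q') \<subseteq> F"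
    using V' verifies_iff_subset_matroid_span[OF B'] by (simp add: S'_def F_S')
  then have "light - F \<subseteq> B'"
    using light_subset by blast
  then have "B' \<inter> light = S' \<union> (light - F)"
    using \<open>S' \<subseteq> F\<close> \<open>B' \<inter> F = S'\<close> by (auto simp: S'_def)
  also have "card \<dots> = card S' + card (light - F)"
    using \<open>S' \<subseteq> F\<close> basis_finite[OF B'] finite_light
    by (intro card_Un_disjoint) (auto simp: S'_def)
  finally have "card (B' \<inter> light) = card S' + card (light - F)" .
  moreover have "card (B \<inter> light) = card (B \<inter> light \<inter> F) + card (B \<inter> light - F)"
    using basis_finite[OF B] by (simp add: card_Int_Diff)
  moreover have "card (B \<inter> light \<inter> F) \<le> card S'"
    by (intro indep_card_le_if_subset_span[OF matroid \<open>indep S'\<close>] basis_subset_indep[OF matroid B])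
      (auto simp: F_S')
  moreover have "card (B \<inter> light - F) \<le> card (light - F)"
    using finite_light by (intro card_mono) auto
  ultimately have "card (B \<inter> light - F) = card (light - F)" "card (B \<inter> light \<inter> F) = card S'"
    using is_MWB_card_light_eq[OF MB MB'] by linarith+
  then show "card (B \<inter> light \<inter> F) = card (B' \<inter> Q' \<inter> light)"
    by (simp add: S'_def)
  have "B \<inter> light - F = light - F"
    using \<open>card (B \<inter> light - F) = card (light - F)\<close> finite_light
    by (intro card_subset_eq) auto
  then show "light - F \<subseteq> B"
    by blast
qed

lemma exists_verifying_set_card_le:
  assumes MB: "is_MWB E indep w B" and MB': "is_MWB E indep w B'"
    and V': "verifies E indep A w Q' B'"
  obtains Q where "verifies E indep A w Q B" "card Q \<le> card Q'"
proof -
  have B: "basis E indep B" and B': "basis E indep B'"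
    using MB MB' by (simp_all add: is_MWB_def)
  define S' where "S' = B' \<inter> Q' \<inter> light"
  define F where "F = matroid_span E indep S'"
  text \<open>\<open>S\<close> takes over the role of \<open>S'\<close> (it spans the same \<open>F\<close>), and only the elements outside
    \<open>B\<close> and \<open>F\<close> need to be queried besides.\<close>
  define S where "S = B \<inter> light \<inter> F"
  define Q where "Q = S \<union> (E - B - F)"
  have "indep S'"
    unfolding S'_def by (rule basis_subset_indep[OF matroid B']) blast
  have "indep S"
    unfolding S_def by (rule basis_subset_indep[OF matroid B]) blast
  have "Q' \<subseteq> E" "Q' \<inter> light \<union> (E - B' - Q') \<subseteq> F"
    using V' verifies_iff_subset_matroid_span[OF B'] by (simp_all add: S'_def F_def)
  have B'_F: "B' \<inter> F = S'"
    unfolding F_def by (rule indep_Int_matroid_span[OF matroid basis_indep[OF B']]) (auto simp: S'_def)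
  have "light - F \<subseteq> B" and "card S = card S'"
    using is_MWB_light_parts[OF MB MB' V'] by (simp_all add: S_def S'_def F_def)
  have "F \<subseteq> matroid_span E indep S"
    unfolding F_def
    using \<open>indep S'\<close> \<open>indep S\<close> \<open>card S = card S'\<close>
    by (intro matroid_span_subset_if_card_eq[OF matroid]) (auto simp: S_def F_def)
  moreover have "Q \<inter> light \<union> (E - B - Q) \<subseteq> F" "B \<inter> Q \<inter> light = S"
    using \<open>light - F \<subseteq> B\<close> by (auto simp: Q_def S_def)
  moreover have "Q \<subseteq> E"
    using basis_subset[OF B] by (auto simp: Q_def S_def)
  ultimately have "verifies E indep A w Q B"
    using verifies_iff_subset_matroid_span[OF B] by auto
  moreover have "card (E - B - F) \<le> card (E - B' - F)"
  proof (rule card_Diff_Diff_le)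
    have "indep (B \<inter> F)"
      by (rule basis_subset_indep[OF matroid B]) blast
    then show "card (B \<inter> F) \<le> card (B' \<inter> F)"
      using indep_card_le_if_subset_span[OF matroid \<open>indep S'\<close>] B'_F by (simp add: F_def)
  qed (use basis_subset[OF B] basis_subset[OF B'] basis_card_eq[OF matroid B B']
      matroid_finite[OF matroid] in auto)
  moreover have "card Q = card S + card (E - B - F)"
    unfolding Q_def using matroid_finite[OF matroid] basis_finite[OF B]
    by (intro card_Un_disjoint) (auto simp: S_def)
  moreover have "card S' + card (E - B' - F) \<le> card Q'"
  proof -
    have "card S' + card (E - B' - F) = card (S' \<union> (E - B' - F))"
      using B'_F basis_finite[OF B'] matroid_finite[OF matroid]
      by (intro card_Un_disjoint[symmetric]) (auto simp: S'_def)
    also have "\<dots> \<le> card Q'"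
      using \<open>Q' \<inter> light \<union> (E - B' - Q') \<subseteq> F\<close> \<open>Q' \<subseteq> E\<close> matroid_finite[OF matroid]
      by (intro card_mono) (auto simp: S'_def finite_subset)
    finally show ?thesis .
  qed
  ultimately show thesis
    using that \<open>card S = card S'\<close> by simp
qed

lemma uniform_verification_cost_le:
  assumes "\<forall>e\<in>E. c e = k" "\<forall>e\<in>E. 0 \<le> c e"
    and MB: "is_MWB E indep w B" and MB': "is_MWB E indep w B'"
  shows "verification_cost E indep A w c B \<le> verification_cost E indep A w c B'"
proof -
  have "finite E"
    by (rule matroid_finite[OF matroid])
  obtain Q' where V': "verifies E indep A w Q' B'" and Q': "sum c Q' = verification_cost E indep A w c B'"
    using verification_cost_attained[OF \<open>finite E\<close> MB'] .
  obtain Q where V: "verifies E indep A w Q B" and "card Q \<le> card Q'"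
    using exists_verifying_set_card_le[OF MB MB' V'] .
  have sum_c: "sum c X = k * card X" if "X \<subseteq> E" for X
    using assms(1) that by (simp add: subset_iff)
  have "Q \<subseteq> E" "Q' \<subseteq> E"
    using V V' by (simp_all add: verifies_def)
  have "sum c Q \<le> sum c Q'"
  proof (cases "Q = {}")
    case True
    then show ?thesis
      using assms(2) \<open>Q' \<subseteq> E\<close> by (auto intro: sum_nonneg)
  next
    case False
    then have "0 \<le> k"
      using assms \<open>Q \<subseteq> E\<close> by auto
    then show ?thesis
      using \<open>card Q \<le> card Q'\<close> \<open>Q \<subseteq> E\<close> \<open>Q' \<subseteq> E\<close> by (simp add: sum_c mult_left_mono)
  qed
  then show ?thesis
    using verification_cost_le_sum[OF \<open>finite E\<close> V, of c] Q' by linarith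
qed

end

theorem corollary23:
  fixes E :: "'a set" and indep :: "'a set \<Rightarrow> bool"
    and A :: "'a \<Rightarrow> real set" and w c :: "'a \<Rightarrow> real" and D K :: "'a set"
  assumes "wu_matroid E indep A w c"
    and "\<forall>e\<in>E. A e = {lower A e, upper A e}"
    and "compatible_minor E indep A w c D K"
    and "\<forall>e\<in>minor_ground E D K. w e \<noteq> upper A e \<and> w e \<noteq> lower A e"
  shows "is_MWB E indep w K \<and>
           (\<exists>Q. verifies E indep A w Q K \<and> sum c Q = opt_cost E indep A w c) \<and>
         ((\<exists>k. \<forall>e\<in>E. c e = k) \<longrightarrow> (\<exists>L U. L < U \<and> (\<forall>e\<in>E. A e = {L, U})) \<longrightarrow>
           (\<forall>B B'. is_MWB E indep w B \<and> is_MWB E indep w B' \<longrightarrow>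
              verification_cost E indep A w c B = verification_cost E indep A w c B'))"
proof -
  have M: "matroid E indep" and weights: "\<forall>e\<in>E. w e \<in> A e" and costs: "\<forall>e\<in>E. 0 \<le> c e"
    using assms(1) by (auto simp: wu_matroid_def)
  have "minor_ground E D K = {}"
    using weights assms(2,4) unfolding minor_ground_def by force
  moreover have "verification_cost E indep A w c B = verification_cost E indep A w c B'"
    if "\<forall>e\<in>E. c e = k" "L < U" "\<forall>e\<in>E. A e = {L, U}" "is_MWB E indep w B" "is_MWB E indep w B'"
    for k L U B B'
  proof -
    interpret two_valued_uncertainty_matroid E indep A w L U
      using M weights that(2,3) by unfold_locales auto
    show ?thesis
      using uniform_verification_cost_le[OF that(1) costs] that(4,5) by (meson order_antisym)
  qed
  ultimately show ?thesis
    using compatible_minor_empty_ground[OF assms(3)] by blast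
qed

end
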